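(* If $(a_{ij})\in\mathbb P^9$ satisfies the five Plücker relations and the superintegrability conditions (SIC), then the polynomial $D(z,w)$ decomposes over $\mathbb C$ into a product of polynomials of degree at most one in $z,w$.
   Context: Homogeneous coordinates $a_{ij}$ ($i,j\ge0$, $i+j\le3$) on $\mathbb P^9$. Define $D(z,w)=\sum_{0\le i,j\le2,(i,j)\ne(2,2)}a_{ij}z^iw^j$ (a cubic with no $z^3,w^3,z^2w^2$ terms), $A_z(w)=a_{21}w^2+2a_{20}w+a_{30}$, $B_w(z)=a_{12}z^2+2a_{02}z+a_{03}$ (names of polynomials; subscripts on $D$ are partial derivatives). Plücker relations: $a_{03}a_{21}-a_{02}a_{11}+a_{01}a_{12}=0$, $a_{03}a_{20}-a_{02}a_{10}+a_{00}a_{12}=0$, $a_{03}a_{30}-a_{01}a_{10}+a_{00}a_{11}=0$, $a_{02}a_{30}-a_{01}a_{20}+a_{00}a_{21}=0$, $a_{12}a_{30}-a_{11}a_{20}+a_{10}a_{21}=0$. (SIC): the polynomial identities $3A_zDD_{ww}-2A_zB_wD_z-2A_zD_w^2+DD_wD_{zz}=0$, $3B_wDD_{zz}-2A_zB_wD_w-2B_wD_z^2+DD_zD_{ww}=0$, $2D^2D_{zz}D_{ww}-B_wDD_zD_{zz}-A_zDD_wD_{ww}-A_zB_wD_zD_w+A_z^2B_w^2=0$ in $\mathbb C[z,w]$. *)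

theory Defs
  imports "HOL-Analysis.Analysis"
begin

text \<open>Homogeneous coordinates a i j (i,j >= 0, i+j <= 3) of a point of P^9 are
modelled by a function a :: nat => nat => complex; only entries with i+j <= 3 matter.
Polynomials in C[z,w] are represented by their polynomial functions C x C -> C
(equivalent, as C is infinite).\<close>

definition proj_point :: "(nat \<Rightarrow> nat \<Rightarrow> complex) \<Rightarrow> bool" where
  "proj_point a \<longleftrightarrow> (\<exists>i j. i + j \<le> 3 \<and> a i j \<noteq> 0)"

definition pluecker :: "(nat \<Rightarrow> nat \<Rightarrow> complex) \<Rightarrow> bool" where
  "pluecker a \<longleftrightarrow>
     a 0 3 * a 2 1 - a 0 2 * a 1 1 + a 0 1 * a 1 2 = 0 \<and>
     a 0 3 * a 2 0 - a 0 2 * a 1 0 + a 0 0 * a 1 2 = 0 \<and>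
     a 0 3 * a 3 0 - a 0 1 * a 1 0 + a 0 0 * a 1 1 = 0 \<and>
     a 0 2 * a 3 0 - a 0 1 * a 2 0 + a 0 0 * a 2 1 = 0 \<and>
     a 1 2 * a 3 0 - a 1 1 * a 2 0 + a 1 0 * a 2 1 = 0"

definition Dpol :: "(nat \<Rightarrow> nat \<Rightarrow> complex) \<Rightarrow> complex \<Rightarrow> complex \<Rightarrow> complex" where
  "Dpol a z w = (\<Sum>(i,j)\<in>{(i,j). i \<le> 2 \<and> j \<le> 2 \<and> (i,j) \<noteq> (2,2)}. a i j * z ^ i * w ^ j)"

definition Dz :: "(nat \<Rightarrow> nat \<Rightarrow> complex) \<Rightarrow> complex \<Rightarrow> complex \<Rightarrow> complex" where
  "Dz a z w = deriv (\<lambda>t. Dpol a t w) z"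
definition Dw :: "(nat \<Rightarrow> nat \<Rightarrow> complex) \<Rightarrow> complex \<Rightarrow> complex \<Rightarrow> complex" where
  "Dw a z w = deriv (\<lambda>t. Dpol a z t) w"
definition Dzz :: "(nat \<Rightarrow> nat \<Rightarrow> complex) \<Rightarrow> complex \<Rightarrow> complex \<Rightarrow> complex" where
  "Dzz a z w = deriv (\<lambda>t. Dz a t w) z"
definition Dww :: "(nat \<Rightarrow> nat \<Rightarrow> complex) \<Rightarrow> complex \<Rightarrow> complex \<Rightarrow> complex" where
  "Dww a z w = deriv (\<lambda>t. Dw a z t) w"

definition Az :: "(nat \<Rightarrow> nat \<Rightarrow> complex) \<Rightarrow> complex \<Rightarrow> complex" where
  "Az a w = a 2 1 * w ^ 2 + 2 * a 2 0 * w + a 3 0"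
definition Bw :: "(nat \<Rightarrow> nat \<Rightarrow> complex) \<Rightarrow> complex \<Rightarrow> complex" where
  "Bw a z = a 1 2 * z ^ 2 + 2 * a 0 2 * z + a 0 3"

definition SIC :: "(nat \<Rightarrow> nat \<Rightarrow> complex) \<Rightarrow> bool" where
  "SIC a \<longleftrightarrow> (\<forall>z w.
     3 * Az a w * Dpol a z w * Dww a z w - 2 * Az a w * Bw a z * Dz a z w
       - 2 * Az a w * (Dw a z w)^2 + Dpol a z w * Dw a z w * Dzz a z w = 0 \<and>
     3 * Bw a z * Dpol a z w * Dzz a z w - 2 * Az a w * Bw a z * Dw a z w
       - 2 * Bw a z * (Dz a z w)^2 + Dpol a z w * Dz a z w * Dww a z w = 0 \<and>
     2 * (Dpol a z w)^2 * Dzz a z w * Dww a z w - Bw a z * Dpol a z w * Dz a z w * Dzz a z w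
       - Az a w * Dpol a z w * Dw a z w * Dww a z w - Az a w * Bw a z * Dz a z w * Dw a z w
       + (Az a w)^2 * (Bw a z)^2 = 0)"

definition linear_product :: "(complex \<Rightarrow> complex \<Rightarrow> complex) \<Rightarrow> bool" where
  "linear_product f \<longleftrightarrow> (\<exists>fs :: (complex \<times> complex \<times> complex) list.
     \<forall>z w. f z w = (\<Prod>(c0,c1,c2)\<leftarrow>fs. c0 + c1 * z + c2 * w))"

end

theory Submission
  imports Defs
begin

text \<open>The first SIC identity is a polynomial identity of degree at most four in each of \<open>z\<close>
  and \<open>w\<close>; comparing coefficients yields polynomial relations among the \<open>a\<^sub>i\<^sub>j\<close>. A handful of
  them, combined with the Pluecker relations, determine the shape of \<open>D\<close> according to which of
  \<open>a\<^sub>2\<^sub>1\<close>, \<open>a\<^sub>1\<^sub>2\<close>, \<open>a\<^sub>1\<^sub>1\<close> vanish: \<open>(z + u) (w + v)\<close> times a line, a line times a quadratic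
  in one variable, a product of two lines, \<open>\<alpha> (z + p)\<^sup>2 + \<beta> (w + q)\<^sup>2\<close>, a quadratic in one
  variable, or an affine function. Over \<open>\<complex>\<close> each of these splits into linear factors.\<close>

lemma polyfun2_eq_0:
  fixes c :: "nat \<Rightarrow> nat \<Rightarrow> 'a::{comm_ring,real_normed_div_algebra}"
  assumes "\<And>z w. (\<Sum>i\<le>m. \<Sum>j\<le>n. c i j * z^i * w^j) = 0" and "i \<le> m" and "j \<le> n"
  shows "c i j = 0"
proof -
  have "(\<Sum>i\<le>m. (\<Sum>j\<le>n. c i j * w^j) * z^i) = (\<Sum>i\<le>m. \<Sum>j\<le>n. c i j * z^i * w^j)" for z w
    by (intro sum.cong refl) (simp add: sum_distrib_left algebra_simps)
  then have "(\<Sum>i\<le>m. (\<Sum>j\<le>n. c i j * w^j) * z^i) = 0" for z w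
    using assms(1) by simp
  then have "(\<Sum>j\<le>n. c i j * w^j) = 0" for w
    using polyfun_eq_0[of "\<lambda>i. \<Sum>j\<le>n. c i j * w^j" m] assms(2) by auto
  then show ?thesis
    using polyfun_eq_0[of "c i" n] assms(3) by auto
qed

lemma Dpol_eq:
  "Dpol a z w = a 0 0 + a 1 0 * z + a 0 1 * w + a 2 0 * z^2 + a 1 1 * z * w
     + a 0 2 * w^2 + a 2 1 * z^2 * w + a 1 2 * z * w^2"
proof -
  have "{(i,j). i \<le> (2::nat) \<and> j \<le> (2::nat) \<and> (i,j) \<noteq> (2,2)} =
      {(0,0),(0,1),(0,2),(1,0),(1,1),(1,2),(2,0),(2,1)}"
    by (auto simp: le_Suc_eq numeral_2_eq_2)
  then show ?thesis
    unfolding Dpol_def by (simp add: algebra_simps)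
qed

lemma Dz_eq: "Dz a z w = a 1 0 + 2 * a 2 0 * z + a 1 1 * w + 2 * a 2 1 * z * w + a 1 2 * w^2"
  unfolding Dz_def Dpol_eq
  by (rule DERIV_imp_deriv, (rule derivative_eq_intros refl)+, simp add: algebra_simps)

lemma Dw_eq: "Dw a z w = a 0 1 + a 1 1 * z + 2 * a 0 2 * w + a 2 1 * z^2 + 2 * a 1 2 * z * w"
  unfolding Dw_def Dpol_eq
  by (rule DERIV_imp_deriv, (rule derivative_eq_intros refl)+, simp add: algebra_simps)

lemma Dzz_eq: "Dzz a z w = 2 * a 2 0 + 2 * a 2 1 * w"
  unfolding Dzz_def Dz_eq
  by (rule DERIV_imp_deriv, (rule derivative_eq_intros refl)+, simp add: algebra_simps)

lemma Dww_eq: "Dww a z w = 2 * a 0 2 + 2 * a 1 2 * z"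
  unfolding Dww_def Dw_eq
  by (rule DERIV_imp_deriv, (rule derivative_eq_intros refl)+, simp add: algebra_simps)

definition sic1_coeffs :: "(nat \<Rightarrow> nat \<Rightarrow> complex) \<Rightarrow> complex list list" where
  "sic1_coeffs a =
    [[2*a 0 0*a 0 1*a 2 0 + 6*a 0 0*a 0 2*a 3 0 - 2*a 1 0*a 3 0*a 0 3 - 2*a 0 1^2*a 3 0,
      2*a 0 0*a 0 1*a 2 1 + 16*a 0 0*a 2 0*a 0 2 - 4*a 1 0*a 2 0*a 0 3 - 2*a 0 1^2*a 2 0
        - 2*a 0 1*a 0 2*a 3 0 - 2*a 1 1*a 3 0*a 0 3,
      10*a 0 0*a 0 2*a 2 1 - 2*a 1 0*a 2 1*a 0 3 + 2*a 0 1*a 2 0*a 0 2 - 4*a 2 0*a 1 1*a 0 3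
        - 2*a 0 2^2*a 3 0 - 2*a 3 0*a 1 2*a 0 3,
      4*a 0 1*a 0 2*a 2 1 - 4*a 2 0*a 1 2*a 0 3 - 2*a 1 1*a 2 1*a 0 3,
      2*a 0 2^2*a 2 1 - 2*a 2 1*a 1 2*a 0 3],
     [2*a 0 0*a 2 0*a 1 1 + 6*a 0 0*a 3 0*a 1 2 + 2*a 1 0*a 0 1*a 2 0 + 2*a 1 0*a 0 2*a 3 0
       - 4*a 0 1*a 1 1*a 3 0 - 4*a 2 0*a 3 0*a 0 3,
      16*a 0 0*a 2 0*a 1 2 + 2*a 0 0*a 1 1*a 2 1 + 2*a 1 0*a 0 1*a 2 1 + 8*a 1 0*a 2 0*a 0 2
        - 4*a 0 1*a 2 0*a 1 1 - 2*a 0 1*a 3 0*a 1 2 - 8*a 2 0^2*a 0 3 - 6*a 1 1*a 0 2*a 3 0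
        - 4*a 3 0*a 2 1*a 0 3,
      10*a 0 0*a 2 1*a 1 2 + 6*a 1 0*a 0 2*a 2 1 + 2*a 0 1*a 2 0*a 1 2 - 6*a 2 0*a 1 1*a 0 2
        - 12*a 2 0*a 2 1*a 0 3 - 8*a 0 2*a 3 0*a 1 2,
      4*a 0 1*a 2 1*a 1 2 - 8*a 2 0*a 0 2*a 1 2 - 4*a 2 1^2*a 0 3,
      0],
     [2*a 0 0*a 2 0*a 2 1 + 2*a 1 0*a 2 0*a 1 1 + 4*a 1 0*a 3 0*a 1 2 + 2*a 0 1*a 2 0^2
       - 4*a 0 1*a 3 0*a 2 1 - 2*a 2 0*a 0 2*a 3 0 - 2*a 1 1^2*a 3 0,
      2*a 0 0*a 2 1^2 + 12*a 1 0*a 2 0*a 1 2 + 2*a 1 0*a 1 1*a 2 1 - 2*a 0 1*a 2 0*a 2 1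
        - 2*a 2 0*a 1 1^2 - 4*a 1 1*a 3 0*a 1 2 - 10*a 0 2*a 3 0*a 2 1,
      8*a 1 0*a 2 1*a 1 2 - 2*a 2 0*a 1 1*a 1 2 - 12*a 2 0*a 0 2*a 2 1 - 4*a 3 0*a 1 2^2,
      -4*a 2 0*a 1 2^2 + 2*a 1 1*a 2 1*a 1 2 - 4*a 0 2*a 2 1^2,
      0],
     [2*a 1 0*a 2 0*a 2 1 + 2*a 2 0^2*a 1 1 + 2*a 2 0*a 3 0*a 1 2 - 4*a 1 1*a 3 0*a 2 1,
      2*a 1 0*a 2 1^2 + 8*a 2 0^2*a 1 2 - 2*a 2 0*a 1 1*a 2 1 - 6*a 3 0*a 2 1*a 1 2,
      0,
      0,
      0],
     [2*a 2 0^2*a 2 1 - 2*a 3 0*a 2 1^2,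
      0,
      0,
      0,
      0]]"

lemma sic1_expansion:
  "3 * Az a w * Dpol a z w * Dww a z w - 2 * Az a w * Bw a z * Dz a z w
     - 2 * Az a w * (Dw a z w)^2 + Dpol a z w * Dw a z w * Dzz a z w
   = (\<Sum>i\<le>4. \<Sum>j\<le>4. sic1_coeffs a ! i ! j * z^i * w^j)"
  unfolding Dpol_eq Dz_eq Dw_eq Dzz_eq Dww_eq Az_def Bw_def sic1_coeffs_def
  by (simp add: eval_nat_numeral) algebra

lemma sic1_coeffs_eq_0:
  assumes "SIC a" and "i \<le> 4" and "j \<le> 4"
  shows "sic1_coeffs a ! i ! j = 0"
  using polyfun2_eq_0[of "\<lambda>i j. sic1_coeffs a ! i ! j", OF _ assms(2,3)] assms(1)
  unfolding SIC_def sic1_expansion by blast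

lemma linear_product_affine: "linear_product (\<lambda>z w. c0 + c1 * z + c2 * w)"
  unfolding linear_product_def by (intro exI[of _ "[(c0, c1, c2)]"]) simp

lemma linear_product_mult:
  assumes "linear_product f" and "linear_product g"
  shows "linear_product (\<lambda>z w. f z w * g z w)"
proof -
  obtain fs gs where "\<And>z w. f z w = (\<Prod>(c0,c1,c2)\<leftarrow>fs. c0 + c1 * z + c2 * w)"
    and "\<And>z w. g z w = (\<Prod>(c0,c1,c2)\<leftarrow>gs. c0 + c1 * z + c2 * w)"
    using assms unfolding linear_product_def by blast
  then show ?thesis
    unfolding linear_product_def by (intro exI[of _ "fs @ gs"]) simp
qed

lemma linear_product_swap:
  assumes "linear_product f"
  shows "linear_product (\<lambda>z w. f w z)"
proof -
  obtain fs where "\<And>z w. f z w = (\<Prod>(c0,c1,c2)\<leftarrow>fs. c0 + c1 * z + c2 * w)"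
    using assms unfolding linear_product_def by blast
  then show ?thesis
    unfolding linear_product_def
    by (intro exI[of _ "map (\<lambda>(c0,c1,c2). (c0,c2,c1)) fs"]) (simp add: comp_def case_prod_unfold add_ac)
qed

lemma quadratic_root_exists:
  fixes \<alpha> \<beta> \<gamma> :: complex
  assumes "\<alpha> \<noteq> 0"
  shows "\<exists>r. \<alpha> * r^2 + \<beta> * r + \<gamma> = 0"
proof
  let ?s = "csqrt (\<beta>^2 - 4 * \<alpha> * \<gamma>)"
  show "\<alpha> * ((- \<beta> + ?s) / (2 * \<alpha>))^2 + \<beta> * ((- \<beta> + ?s) / (2 * \<alpha>)) + \<gamma> = 0"
    using assms by (simp add: field_simps power2_eq_square) algebra
qed

lemma linear_product_quadratic: "linear_product (\<lambda>z w. \<alpha> * z^2 + \<beta> * z + \<gamma>)"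
proof (cases "\<alpha> = 0")
  case True
  then show ?thesis
    using linear_product_affine[of \<gamma> \<beta> 0] by (simp add: add_ac)
next
  case False
  then obtain r where r: "\<alpha> * r^2 + \<beta> * r + \<gamma> = 0"
    using quadratic_root_exists by blast
  have "\<alpha> * z^2 + \<beta> * z + \<gamma> = (- r + z) * (\<beta> + \<alpha> * r + \<alpha> * z)" for z
    using r by algebra
  then show ?thesis
    unfolding linear_product_def by (intro exI[of _ "[(- r, 1, 0), (\<beta> + \<alpha> * r, \<alpha>, 0)]"]) simp
qed

lemma linear_product_sum_of_squares: "linear_product (\<lambda>z w. \<alpha> * (z + p)^2 + \<beta> * (w + q)^2)"
proof -
  define s t where "s = csqrt \<alpha>" and "t = csqrt \<beta>"
  have "\<alpha> * (z + p)^2 + \<beta> * (w + q)^2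
      = (s*p + \<i>*t*q + s*z + \<i>*t*w) * (s*p - \<i>*t*q + s*z - \<i>*t*w)" for z w
    unfolding s_def t_def by (simp add: algebra_simps power2_eq_square) algebra
  then show ?thesis
    unfolding linear_product_def
    by (intro exI[of _ "[(s*p + \<i>*t*q, s, \<i>*t), (s*p - \<i>*t*q, s, - \<i>*t)]"]) simp
qed

lemma linear_product_Dpol_cubic:
  assumes "pluecker a" and "SIC a" and "a 2 1 \<noteq> 0" and "a 1 2 \<noteq> 0"
  shows "linear_product (Dpol a)"
proof -
  have "a 2 1 * (a 3 0 * a 2 1 - a 2 0^2) = 0"
    and "a 2 1 * (a 0 3 * a 1 2 - a 0 2^2) = 0"
    and "a 1 1 * a 2 1 * a 1 2 = 2 * a 2 0 * a 1 2^2 + 2 * a 0 2 * a 2 1^2"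
    using sic1_coeffs_eq_0[OF \<open>SIC a\<close>, of 4 0] sic1_coeffs_eq_0[OF \<open>SIC a\<close>, of 0 4]
      sic1_coeffs_eq_0[OF \<open>SIC a\<close>, of 2 3]
    unfolding sic1_coeffs_def by (simp_all add: eval_nat_numeral) algebra+
  then have a30: "a 3 0 = a 2 0^2 / a 2 1" and a03: "a 0 3 = a 0 2^2 / a 1 2"
    and a11: "a 1 1 = 2 * a 2 0 * a 1 2 / a 2 1 + 2 * a 0 2 * a 2 1 / a 1 2"
    using assms(3,4) by (simp_all add: field_simps power2_eq_square)
  have a10: "a 1 0 = (a 1 1 * a 2 0 - a 1 2 * a 3 0) / a 2 1"
    and a01: "a 0 1 = (a 0 2 * a 1 1 - a 0 3 * a 2 1) / a 1 2"
    and a00: "a 0 0 = (a 0 2 * a 1 0 - a 0 3 * a 2 0) / a 1 2"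
    using assms(1,3,4) unfolding pluecker_def by (simp_all add: field_simps)
  define u v where "u = a 0 2 / a 1 2" and "v = a 2 0 / a 2 1"
  have "Dpol a z w = (u + z) * ((v + w) * (a 2 1 * u + a 1 2 * v + a 2 1 * z + a 1 2 * w))" for z w
    unfolding Dpol_eq a00 a10 a01 unfolding a11 a30 a03 u_def v_def
    using assms(3,4) by (simp add: field_simps power2_eq_square)
  then show ?thesis
    unfolding linear_product_def
    by (intro exI[of _ "[(u, 1, 0), (v, 0, 1), (a 2 1 * u + a 1 2 * v, a 2 1, a 1 2)]"]) simp
qed

lemma linear_product_Dpol_cubic_z:
  assumes "pluecker a" and "SIC a" and "a 2 1 \<noteq> 0" and "a 1 2 = 0"
  shows "linear_product (Dpol a)"
proof -
  have "a 2 1 * (a 0 3 * a 1 2 - a 0 2^2) = 0"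
    using sic1_coeffs_eq_0[OF \<open>SIC a\<close>, of 0 4] unfolding sic1_coeffs_def
    by (simp add: eval_nat_numeral) algebra
  then have "a 0 2 = 0"
    using assms(3,4) by simp
  then have a10: "a 1 0 = a 1 1 * a 2 0 / a 2 1" and a00: "a 0 0 = a 0 1 * a 2 0 / a 2 1"
    using assms(1,3,4) unfolding pluecker_def by (simp_all add: field_simps)
  have "Dpol a = (\<lambda>z w. (a 2 0 / a 2 1 + w) * (a 2 1 * z^2 + a 1 1 * z + a 0 1))"
    using \<open>a 0 2 = 0\<close> assms(3,4)
    unfolding Dpol_eq a10 a00 by (intro ext) (simp add: field_simps power2_eq_square)
  moreover have "linear_product (\<lambda>z w. (a 2 0 / a 2 1 + w) * (a 2 1 * z^2 + a 1 1 * z + a 0 1))"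
    using linear_product_affine[of "a 2 0 / a 2 1" 0 1]
    by (intro linear_product_mult linear_product_quadratic) simp
  ultimately show ?thesis
    by simp
qed

lemma linear_product_Dpol_cubic_w:
  assumes "pluecker a" and "SIC a" and "a 1 2 \<noteq> 0" and "a 2 1 = 0"
  shows "linear_product (Dpol a)"
proof -
  have "a 2 0^2 * a 1 2 = 0"
    using sic1_coeffs_eq_0[OF \<open>SIC a\<close>, of 3 1] assms(4) unfolding sic1_coeffs_def
    by (simp add: eval_nat_numeral)
  then have "a 2 0 = 0"
    using assms(3) by simp
  then have a01: "a 0 1 = a 1 1 * a 0 2 / a 1 2" and a00: "a 0 0 = a 1 0 * a 0 2 / a 1 2"
    using assms(1,3,4) unfolding pluecker_def by (simp_all add: field_simps)
  have "Dpol a = (\<lambda>z w. (a 0 2 / a 1 2 + z) * (a 1 2 * w^2 + a 1 1 * w + a 1 0))"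
    using \<open>a 2 0 = 0\<close> assms(3,4)
    unfolding Dpol_eq a01 a00 by (intro ext) (simp add: field_simps power2_eq_square)
  moreover have "linear_product (\<lambda>z w. (a 0 2 / a 1 2 + z) * (a 1 2 * w^2 + a 1 1 * w + a 1 0))"
    using linear_product_affine[of "a 0 2 / a 1 2" 1 0]
    by (intro linear_product_mult linear_product_swap[OF linear_product_quadratic]) simp
  ultimately show ?thesis
    by simp
qed

lemma linear_product_Dpol_bilinear:
  assumes "pluecker a" and "SIC a" and "a 2 1 = 0" and "a 1 2 = 0" and "a 1 1 \<noteq> 0"
  shows "linear_product (Dpol a)"
proof -
  have "a 0 2 = 0" and "a 2 0 = 0"
    using assms(1,3-5) unfolding pluecker_def by simp_all
  then have "a 1 1^2 * a 3 0 = 0"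
    using sic1_coeffs_eq_0[OF \<open>SIC a\<close>, of 2 0] assms(3,4) unfolding sic1_coeffs_def
    by (simp add: eval_nat_numeral)
  then have "a 3 0 = 0"
    using assms(5) by simp
  then have a00: "a 0 0 = a 0 1 * a 1 0 / a 1 1"
    using assms(1,5) unfolding pluecker_def by (simp add: field_simps)
  have "Dpol a z w = 1 / a 1 1 * ((a 0 1 + a 1 1 * z) * (a 1 0 + a 1 1 * w))" for z w
    using \<open>a 0 2 = 0\<close> \<open>a 2 0 = 0\<close> assms(3-5) by (simp add: Dpol_eq a00 field_simps)
  then show ?thesis
    unfolding linear_product_def
    by (intro exI[of _ "[(1 / a 1 1, 0, 0), (a 0 1, a 1 1, 0), (a 1 0, 0, a 1 1)]"]) simp
qed

lemma linear_product_Dpol_quadratic: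
  assumes "pluecker a" and "SIC a" and "a 2 1 = 0" and "a 1 2 = 0" and "a 1 1 = 0"
  shows "linear_product (Dpol a)"
proof -
  have D: "Dpol a z w = a 0 0 + a 1 0 * z + a 0 1 * w + a 2 0 * z^2 + a 0 2 * w^2" for z w
    using assms(3-5) by (simp add: Dpol_eq)
  have P2: "a 0 3 * a 2 0 = a 0 2 * a 1 0" and P4: "a 0 2 * a 3 0 = a 0 1 * a 2 0"
    using assms(1,3,4) unfolding pluecker_def by simp_all
  consider "a 2 0 \<noteq> 0" "a 0 2 \<noteq> 0" | "a 0 2 = 0" | "a 2 0 = 0" "a 0 2 \<noteq> 0"
    by blast
  then show ?thesis
  proof cases
    case 1
    have "8 * a 0 0 * a 2 0 * a 0 2
        = 2 * a 1 0 * (a 0 3 * a 2 0) + a 0 1^2 * a 2 0 + a 0 1 * (a 0 2 * a 3 0)"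
      using sic1_coeffs_eq_0[OF \<open>SIC a\<close>, of 0 1] assms(3,5) unfolding sic1_coeffs_def
      by (simp add: eval_nat_numeral) algebra
    then have "4 * a 0 0 * a 2 0 * a 0 2 = a 1 0^2 * a 0 2 + a 0 1^2 * a 2 0"
      unfolding P2 P4 by algebra
    then have "Dpol a =
        (\<lambda>z w. a 2 0 * (z + a 1 0 / (2 * a 2 0))^2 + a 0 2 * (w + a 0 1 / (2 * a 0 2))^2)"
      using 1 by (intro ext) (simp add: D field_simps power2_eq_square, algebra)
    then show ?thesis
      by (simp add: linear_product_sum_of_squares)
  next
    case 2
    then have "a 2 0 = 0 \<or> a 0 1 = 0"
      using P4 by auto
    then show ?thesis
    proof
      assume "a 2 0 = 0"
      then have "Dpol a = (\<lambda>z w. a 0 0 + a 1 0 * z + a 0 1 * w)"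
        using 2 by (intro ext) (simp add: D)
      then show ?thesis
        by (simp add: linear_product_affine)
    next
      assume "a 0 1 = 0"
      then have "Dpol a = (\<lambda>z w. a 2 0 * z^2 + a 1 0 * z + a 0 0)"
        using 2 by (intro ext) (simp add: D algebra_simps)
      then show ?thesis
        by (simp add: linear_product_quadratic)
    qed
  next
    case 3
    then have "a 1 0 = 0"
      using P2 by simp
    then have "Dpol a = (\<lambda>z w. a 0 2 * w^2 + a 0 1 * w + a 0 0)"
      using 3 by (intro ext) (simp add: D algebra_simps)
    then show ?thesis
      by (simp add: linear_product_swap[OF linear_product_quadratic])
  qed
qed

theorem lemma4p1:
  fixes a :: "nat \<Rightarrow> nat \<Rightarrow> complex"
  assumes "proj_point a"
    and "pluecker a"
    and "SIC a"
  shows "linear_product (Dpol a)"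
proof -
  consider "a 2 1 \<noteq> 0" "a 1 2 \<noteq> 0" | "a 2 1 \<noteq> 0" "a 1 2 = 0" | "a 2 1 = 0" "a 1 2 \<noteq> 0"
    | "a 2 1 = 0" "a 1 2 = 0" "a 1 1 \<noteq> 0" | "a 2 1 = 0" "a 1 2 = 0" "a 1 1 = 0"
    by blast
  then show ?thesis
    using assms(2,3)
    by cases (simp_all add: linear_product_Dpol_cubic linear_product_Dpol_cubic_z
        linear_product_Dpol_cubic_w linear_product_Dpol_bilinear linear_product_Dpol_quadratic)
qed

end
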